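(* Let $\|\cdot\|_F$ and $\|\cdot\|_G$ be $F$-norms on $\mathbb{R}^{d+1}$. Then $\|\cdot\|_F=\|\cdot\|_G$ if and only if $\{\mathbf{x}\in[0,\infty)^{d+1}:\|\mathbf{x}\|_F=1\}=\{\mathbf{x}\in[0,\infty)^{d+1}:\|\mathbf{x}\|_G=1\}$; that is, each $F$-norm is characterized by the part of its unit sphere contained in the positive orthant.
   Context: An $F$-norm on $\mathbb{R}^{d+1}$ is a norm of the form $\|\mathbf{x}\|_F=E(\max(|x_0|,|x_1|X_1,\dots,|x_d|X_d))$, where $\mathbf{X}=(X_1,\dots,X_d)$ has distribution function $F$ and each $X_i$ is a.s. nonnegative with $0<E(X_i)<\infty$. *)

theory Defs
  imports "HOL-Probability.Probability"
begin

text \<open>Vectors of R^(d+1) are represented as functions nat => real whose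
  coordinates with index > d vanish; coordinates are x 0, x 1, ..., x d.\<close>
definition Rvec :: "nat \<Rightarrow> (nat \<Rightarrow> real) set" where
  "Rvec d = {x. \<forall>i>d. x i = 0}"

definition F_vector :: "nat \<Rightarrow> 'a measure \<Rightarrow> (nat \<Rightarrow> 'a \<Rightarrow> real) \<Rightarrow> bool" where
  "F_vector d M X \<longleftrightarrow> prob_space M \<and>
     (\<forall>i\<in>{1..d}. X i \<in> borel_measurable M \<and> (AE \<omega> in M. 0 \<le> X i \<omega>) \<and>
        integrable M (X i) \<and> 0 < (\<integral>\<omega>. X i \<omega> \<partial>M))"

definition Fnorm :: "nat \<Rightarrow> 'a measure \<Rightarrow> (nat \<Rightarrow> 'a \<Rightarrow> real) \<Rightarrow> (nat \<Rightarrow> real) \<Rightarrow> real" where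
  "Fnorm d M X x = (\<integral>\<omega>. Max ({\<bar>x 0\<bar>} \<union> (\<lambda>i. \<bar>x i\<bar> * X i \<omega>) ` {1..d}) \<partial>M)"

end

theory Submission
  imports Defs
begin

text \<open>A nonnegative, positively homogeneous function on a cone is determined by its unit
  level set: if \<open>f x > 0\<close> then \<open>x / f x\<close> lies on the common unit level set, so
  \<open>g (x / f x) = g x / f x = 1\<close>; symmetrically for \<open>g x > 0\<close>, and otherwise both values vanish.
  An F-norm is positively homogeneous and depends only on \<open>\<bar>x\<^sub>i\<bar>\<close>, so it is
  determined by its values on the positive orthant.\<close>

lemma eq_at_pos_if_unit_level_sets_eq:
  fixes f g :: "('i \<Rightarrow> real) \<Rightarrow> real"
  assumes cone: "\<And>c x. c > 0 \<Longrightarrow> x \<in> C \<Longrightarrow> (\<lambda>i. c * x i) \<in> C"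
    and f_hom: "\<And>c x. c > 0 \<Longrightarrow> x \<in> C \<Longrightarrow> f (\<lambda>i. c * x i) = c * f x"
    and g_hom: "\<And>c x. c > 0 \<Longrightarrow> x \<in> C \<Longrightarrow> g (\<lambda>i. c * x i) = c * g x"
    and level: "{x\<in>C. f x = 1} = {x\<in>C. g x = 1}"
    and x: "x \<in> C" and pos: "f x > 0"
  shows "f x = g x"
proof -
  define c where "c = 1 / f x"
  have c: "c > 0" using pos by (simp add: c_def)
  have "(\<lambda>i. c * x i) \<in> C" "f (\<lambda>i. c * x i) = 1"
    using cone[OF c x] f_hom[OF c x] pos by (simp_all add: c_def)
  then have "g (\<lambda>i. c * x i) = 1" using level by blast
  then show ?thesis using g_hom[OF c x] pos by (simp add: c_def)
qed

lemma eq_on_cone_if_unit_level_sets_eq: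
  fixes f g :: "('i \<Rightarrow> real) \<Rightarrow> real"
  assumes cone: "\<And>c x. c > 0 \<Longrightarrow> x \<in> C \<Longrightarrow> (\<lambda>i. c * x i) \<in> C"
    and f_nonneg: "\<And>x. x \<in> C \<Longrightarrow> 0 \<le> f x"
    and g_nonneg: "\<And>x. x \<in> C \<Longrightarrow> 0 \<le> g x"
    and f_hom: "\<And>c x. c > 0 \<Longrightarrow> x \<in> C \<Longrightarrow> f (\<lambda>i. c * x i) = c * f x"
    and g_hom: "\<And>c x. c > 0 \<Longrightarrow> x \<in> C \<Longrightarrow> g (\<lambda>i. c * x i) = c * g x"
    and level: "{x\<in>C. f x = 1} = {x\<in>C. g x = 1}"
    and x: "x \<in> C"
  shows "f x = g x"
proof -
  consider "f x > 0" | "g x > 0" | "f x = 0" "g x = 0"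
    using f_nonneg[OF x] g_nonneg[OF x] by fastforce
  then show ?thesis
  proof cases
    case 1
    show ?thesis
      by (rule eq_at_pos_if_unit_level_sets_eq[where f = f and g = g])
        (fact cone f_hom g_hom level x 1)+
  next
    case 2
    have "g x = f x"
      by (rule eq_at_pos_if_unit_level_sets_eq[where f = g and g = f])
        (fact cone g_hom f_hom level[symmetric] x 2)+
    then show ?thesis ..
  next
    case 3
    then show ?thesis by simp
  qed
qed

lemma Fnorm_nonneg: "0 \<le> Fnorm d M X x"
proof -
  have "\<bar>x 0\<bar> \<le> Max ({\<bar>x 0\<bar>} \<union> (\<lambda>i. \<bar>x i\<bar> * X i \<omega>) ` {1..d})" for \<omega>
    by (rule Max_ge) auto
  then have "0 \<le> Max ({\<bar>x 0\<bar>} \<union> (\<lambda>i. \<bar>x i\<bar> * X i \<omega>) ` {1..d})" for \<omega>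
    by (rule order_trans[OF abs_ge_zero])
  then show ?thesis
    unfolding Fnorm_def by (rule integral_nonneg_AE[OF AE_I2])
qed

lemma Fnorm_mult:
  assumes "0 \<le> c"
  shows "Fnorm d M X (\<lambda>i. c * x i) = c * Fnorm d M X x"
proof -
  have scaled_values: "{\<bar>c * x 0\<bar>} \<union> (\<lambda>i. \<bar>c * x i\<bar> * X i \<omega>) ` {1..d}
      = (*) c ` ({\<bar>x 0\<bar>} \<union> (\<lambda>i. \<bar>x i\<bar> * X i \<omega>) ` {1..d})" for \<omega>
    using assms by (auto simp: abs_mult)
  have "mono ((*) c)"
    using assms by (simp add: mono_def mult_left_mono)
  then have "Max ({\<bar>c * x 0\<bar>} \<union> (\<lambda>i. \<bar>c * x i\<bar> * X i \<omega>) ` {1..d})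
      = c * Max ({\<bar>x 0\<bar>} \<union> (\<lambda>i. \<bar>x i\<bar> * X i \<omega>) ` {1..d})" for \<omega>
    unfolding scaled_values by (intro mono_Max_commute[symmetric]) auto
  then show ?thesis
    unfolding Fnorm_def by (simp only: integral_mult_right_zero)
qed

lemma Fnorm_abs: "Fnorm d M X (\<lambda>i. \<bar>x i\<bar>) = Fnorm d M X x"
  by (simp add: Fnorm_def)

theorem corollary6p1:
  fixes d :: nat
    and M :: "'a measure" and X :: "nat \<Rightarrow> 'a \<Rightarrow> real"
    and N :: "'b measure" and Y :: "nat \<Rightarrow> 'b \<Rightarrow> real"
  assumes "F_vector d M X" and "F_vector d N Y"
  shows "(\<forall>x\<in>Rvec d. Fnorm d M X x = Fnorm d N Y x) \<longleftrightarrow>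
         {x\<in>Rvec d. (\<forall>i\<le>d. 0 \<le> x i) \<and> Fnorm d M X x = 1} =
         {x\<in>Rvec d. (\<forall>i\<le>d. 0 \<le> x i) \<and> Fnorm d N Y x = 1}"
    (is "_ \<longleftrightarrow> ?level")
proof
  assume "\<forall>x\<in>Rvec d. Fnorm d M X x = Fnorm d N Y x"
  then show ?level by auto
next
  define orthant where "orthant = {x\<in>Rvec d. \<forall>i\<le>d. 0 \<le> x i}"
  assume ?level
  then have level: "{x\<in>orthant. Fnorm d M X x = 1} = {x\<in>orthant. Fnorm d N Y x = 1}"
    by (simp add: orthant_def)
  have on_orthant: "Fnorm d M X x = Fnorm d N Y x" if "x \<in> orthant" for x
  proof (rule eq_on_cone_if_unit_level_sets_eq[where C = orthant, OF _ _ _ _ _ level that])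
    show "(\<lambda>i. c * y i) \<in> orthant" if "c > 0" "y \<in> orthant" for c y
      using that by (simp add: orthant_def Rvec_def)
  qed (simp_all add: Fnorm_nonneg Fnorm_mult)
  show "\<forall>x\<in>Rvec d. Fnorm d M X x = Fnorm d N Y x"
  proof
    fix x assume "x \<in> Rvec d"
    then have "(\<lambda>i. \<bar>x i\<bar>) \<in> orthant" by (simp add: orthant_def Rvec_def)
    then have "Fnorm d M X (\<lambda>i. \<bar>x i\<bar>) = Fnorm d N Y (\<lambda>i. \<bar>x i\<bar>)" by (rule on_orthant)
    then show "Fnorm d M X x = Fnorm d N Y x" by (simp only: Fnorm_abs)
  qed
qed

end
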